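(* In the asymptotic framework described in the context, suppose $y>0$, $F_{\Sigma_n}(u)\to F_\Sigma(u)$ almost surely for almost every $u>0$, and the eigenvalues of each $\Sigma_n$ lie in a segment $[\sigma_{\min},\sigma_{\max}]$. Then for any real $z<0$, the fixed point equation in $s$ \[s=1+\lim_{n,d\to\infty}\frac1n\mathrm{tr}\left(zs\Sigma_n\left(I-zs\Sigma_n\right)^{-1}\right)\] has at most one non-negative real solution.
   Context: Asymptotic framework: a sequence of positive semidefinite matrices $\Sigma_n\in\mathbb{R}^{d\times d}$ indexed by $n$, with $d=d(n)$, $n,d\to\infty$, $d/n\to y\in[0,1)$. $F_{\Sigma_n}(u)=d^{-1}\sum_{i=1}^d\mathbb{I}(\lambda_i(\Sigma_n)\le u)$ is the empirical spectral distribution, $F_\Sigma$ a limiting distribution function; $0<\sigma_{\min}\le\sigma_{\max}$ do not depend on $n$. *)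

theory Defs
  imports "HOL-Probability.Probability" "Jordan_Normal_Form.Char_Poly"
    "Jordan_Normal_Form.Gauss_Jordan_Elimination"
begin

definition mat_trace :: "'a :: comm_ring_1 mat \<Rightarrow> 'a" where
  "mat_trace A = (\<Sum>i<dim_row A. A $$ (i, i))"

text \<open>Empirical spectral distribution F_A(u) = d^{-1} #{i. lambda_i(A) \<le> u},
  eigenvalues counted with (algebraic) multiplicity, i.e. as roots of the
  characteristic polynomial.  For real symmetric matrices all eigenvalues are real,
  so this is exactly the paper's definition.\<close>
definition esd :: "real mat \<Rightarrow> real \<Rightarrow> real" where
  "esd A u = (\<Sum>x\<in>{x. poly (char_poly A) x = 0 \<and> x \<le> u}. real (order x (char_poly A)))
             / real (dim_row A)"

definition resolvent_term :: "nat \<Rightarrow> real mat \<Rightarrow> real \<Rightarrow> real \<Rightarrow> real" where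
  "resolvent_term n S z s =
     mat_trace (((z * s) \<cdot>\<^sub>m S) * the (mat_inverse (1\<^sub>m (dim_row S) - (z * s) \<cdot>\<^sub>m S))) / real n"

end

(* For t \<le> 0 and S positive semidefinite, I - t S is invertible; write R(t) for its inverse.
   The resolvent identity R(t1) - R(t2) = (t1 - t2) R(t1) S R(t2), together with the positivity
   of the quadratic form of R(t1) S R(t2), shows that tr R(t) is nondecreasing on t \<le> 0.
   Since (1/n) tr(z s S (I - z s S)^-1) = (tr R(z s) - d) / n, for z < 0 the right-hand side of
   the fixed point equation is nonincreasing in s \<ge> 0, and so is its limit; hence it meets the
   increasing function s - 1 at most once.  Only the positive semidefiniteness of the Sigma n
   (not even their symmetry) is used: the spectral hypotheses concern the existence of the
   limit, not the uniqueness of the fixed point. *)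
theory Submission
  imports Defs
begin

definition psd_mat :: "'a :: linordered_idom mat \<Rightarrow> bool" where
  "psd_mat A \<longleftrightarrow> (\<forall>v \<in> carrier_vec (dim_col A). 0 \<le> v \<bullet> (A *\<^sub>v v))"

definition resolvent :: "'a :: field mat \<Rightarrow> 'a \<Rightarrow> 'a mat" where
  "resolvent S t = the (mat_inverse (1\<^sub>m (dim_row S) - t \<cdot>\<^sub>m S))"

lemma scalar_prod_self_pos:
  fixes v :: "'a :: linordered_idom vec"
  assumes v: "v \<in> carrier_vec m" and nz: "v \<noteq> 0\<^sub>v m"
  shows "0 < v \<bullet> v"
proof -
  obtain i where i: "i < m" "v $ i \<noteq> 0"
    using nz v by (metis carrier_vecD eq_vecI index_zero_vec(1,2))
  have "v \<bullet> v = (\<Sum>j<m. (v $ j)\<^sup>2)"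
    using v unfolding scalar_prod_def by (auto simp: power2_eq_square lessThan_atLeast0)
  also have "\<dots> > 0"
    by (rule sum_pos2[of _ i]) (use i in auto)
  finally show ?thesis .
qed

lemma scalar_prod_self_nonneg:
  fixes v :: "'a :: linordered_idom vec"
  assumes "v \<in> carrier_vec m"
  shows "0 \<le> v \<bullet> v"
  using scalar_prod_self_pos[OF assms] assms by (cases "v = 0\<^sub>v m") auto

lemma smult_mat_mult_vec:
  fixes A :: "'a :: comm_semiring_0 mat"
  assumes "A \<in> carrier_mat nr nc" and "v \<in> carrier_vec nc"
  shows "(t \<cdot>\<^sub>m A) *\<^sub>v v = t \<cdot>\<^sub>v (A *\<^sub>v v)"
  using assms by (intro eq_vecI) (auto simp: scalar_prod_def sum_distrib_left mult.assoc)

lemma one_minus_smult_mat_mult_vec: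
  fixes S :: "'a :: comm_ring_1 mat"
  assumes S: "S \<in> carrier_mat m m" and u: "u \<in> carrier_vec m"
  shows "(1\<^sub>m m - t \<cdot>\<^sub>m S) *\<^sub>v u = u - t \<cdot>\<^sub>v (S *\<^sub>v u)"
  using S u by (simp add: minus_mult_distrib_mat_vec[of _ m m _ u] smult_mat_mult_vec)

lemma mat_trace_minus:
  assumes "A \<in> carrier_mat m m" "B \<in> carrier_mat m m"
  shows "mat_trace (A - B) = mat_trace A - mat_trace B"
  using assms unfolding mat_trace_def by (simp add: sum_subtractf)

lemma mat_trace_smult:
  assumes "A \<in> carrier_mat m m"
  shows "mat_trace (c \<cdot>\<^sub>m A) = c * mat_trace A"
  using assms unfolding mat_trace_def by (simp add: sum_distrib_left)

lemma mat_trace_one: "mat_trace (1\<^sub>m m) = of_nat m"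
  unfolding mat_trace_def by simp

lemma mat_trace_nonneg_if_psd:
  assumes M: "M \<in> carrier_mat m m" and "psd_mat M"
  shows "0 \<le> mat_trace M"
proof -
  have "0 \<le> M $$ (i, i)" if i: "i < m" for i
  proof -
    have "unit_vec m i \<bullet> (M *\<^sub>v unit_vec m i) = M $$ (i, i)"
      using M i by simp
    then show ?thesis
      using \<open>psd_mat M\<close> M unit_vec_carrier[of m i] unfolding psd_mat_def
      by (metis carrier_matD(2))
  qed
  then show ?thesis using M unfolding mat_trace_def by (auto intro: sum_nonneg)
qed

lemma det_one_minus_smult_psd_nonzero:
  fixes S :: "'a :: linordered_field mat"
  assumes S: "S \<in> carrier_mat m m" and psd: "psd_mat S" and t: "t \<le> 0"
  shows "det (1\<^sub>m m - t \<cdot>\<^sub>m S) \<noteq> 0"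
proof
  assume "det (1\<^sub>m m - t \<cdot>\<^sub>m S) = 0"
  then obtain v where v: "v \<in> carrier_vec m" "v \<noteq> 0\<^sub>v m"
    and "(1\<^sub>m m - t \<cdot>\<^sub>m S) *\<^sub>v v = 0\<^sub>v m"
    using det_0_iff_vec_prod_zero_field[of "1\<^sub>m m - t \<cdot>\<^sub>m S" m] S by fastforce
  then have kernel: "v - t \<cdot>\<^sub>v (S *\<^sub>v v) = 0\<^sub>v m"
    using S by (simp add: one_minus_smult_mat_mult_vec)
  have "0 = v \<bullet> (v - t \<cdot>\<^sub>v (S *\<^sub>v v))"
    unfolding kernel using v by simp
  also have "\<dots> = v \<bullet> v - t * (v \<bullet> (S *\<^sub>v v))"
    using v S by (simp add: scalar_prod_minus_distrib[of _ m])
  finally have "v \<bullet> v = t * (v \<bullet> (S *\<^sub>v v))" by simp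
  moreover have "t * (v \<bullet> (S *\<^sub>v v)) \<le> 0"
    using psd v S t unfolding psd_mat_def by (simp add: mult_nonpos_nonneg)
  ultimately show False using scalar_prod_self_pos[OF v] by simp
qed

lemma resolvent_inverse:
  fixes S :: "'a :: linordered_field mat"
  assumes S: "S \<in> carrier_mat m m" and "psd_mat S" and "t \<le> 0"
  shows resolvent_carrier: "resolvent S t \<in> carrier_mat m m"
    and one_minus_smult_mult_resolvent: "(1\<^sub>m m - t \<cdot>\<^sub>m S) * resolvent S t = 1\<^sub>m m"
    and resolvent_mult_one_minus_smult: "resolvent S t * (1\<^sub>m m - t \<cdot>\<^sub>m S) = 1\<^sub>m m"
proof -
  let ?K = "1\<^sub>m m - t \<cdot>\<^sub>m S"
  have K: "?K \<in> carrier_mat m m" using S by auto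
  have "?K \<in> Units (ring_mat TYPE('a) m undefined)"
    using det_non_zero_imp_unit[OF K det_one_minus_smult_psd_nonzero[OF assms]] .
  then obtain C where "mat_inverse ?K = Some C"
    using mat_inverse(1)[OF K, where b = undefined] by (cases "mat_inverse ?K") auto
  moreover have "resolvent S t = the (mat_inverse ?K)"
    using S unfolding resolvent_def by simp
  ultimately show "resolvent S t \<in> carrier_mat m m" "?K * resolvent S t = 1\<^sub>m m"
    "resolvent S t * ?K = 1\<^sub>m m"
    using mat_inverse(2)[OF K] by auto
qed

lemma inverse_mat_commute:
  fixes A B C :: "'a :: semiring_1 mat"
  assumes A: "A \<in> carrier_mat m m" and B: "B \<in> carrier_mat m m" and C: "C \<in> carrier_mat m m"
    and AB: "A * B = 1\<^sub>m m" and BA: "B * A = 1\<^sub>m m" and AC: "A * C = C * A"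
  shows "B * C = C * B"
proof -
  have "B * C = B * C * (A * B)" using AB B C by simp
  also have "\<dots> = B * (C * A) * B" using A B C by (simp add: assoc_mult_mat[of _ m m _ m _ m])
  also have "\<dots> = (B * A) * C * B" using A B C AC by (simp add: assoc_mult_mat[of _ m m _ m _ m])
  also have "\<dots> = C * B" using BA B C by simp
  finally show ?thesis .
qed

lemma resolvent_commute:
  fixes S :: "'a :: linordered_field mat"
  assumes S: "S \<in> carrier_mat m m" and "psd_mat S" and "t \<le> 0"
  shows "resolvent S t * S = S * resolvent S t"
proof (rule inverse_mat_commute[OF _ resolvent_carrier[OF assms] S
      one_minus_smult_mult_resolvent[OF assms] resolvent_mult_one_minus_smult[OF assms]])
  show "1\<^sub>m m - t \<cdot>\<^sub>m S \<in> carrier_mat m m" using S by auto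
  have "(1\<^sub>m m - t \<cdot>\<^sub>m S) * S = S - t \<cdot>\<^sub>m (S * S)"
    using S by (simp add: minus_mult_distrib_mat[of _ m m] mult_smult_assoc_mat[of _ m m])
  also have "\<dots> = S * (1\<^sub>m m - t \<cdot>\<^sub>m S)"
    using S mult_minus_distrib_mat[of S m m "1\<^sub>m m" m "t \<cdot>\<^sub>m S"]
    by (simp add: mult_smult_distrib[of _ m m])
  finally show "(1\<^sub>m m - t \<cdot>\<^sub>m S) * S = S * (1\<^sub>m m - t \<cdot>\<^sub>m S)" .
qed

lemma psd_resolvent_mult_resolvent:
  fixes S :: "'a :: linordered_field mat"
  assumes S: "S \<in> carrier_mat m m" and psd: "psd_mat S" and t1: "t1 \<le> 0" and t2: "t2 \<le> 0"
  shows "psd_mat (resolvent S t1 * S * resolvent S t2)"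
proof -
  define R1 where "R1 = resolvent S t1"
  define R2 where "R2 = resolvent S t2"
  have R1: "R1 \<in> carrier_mat m m" and R2: "R2 \<in> carrier_mat m m"
    using resolvent_carrier[OF S psd] t1 t2 by (auto simp: R1_def R2_def)
  have "0 \<le> v \<bullet> ((R1 * S * R2) *\<^sub>v v)" if v: "v \<in> carrier_vec m" for v
  proof -
    txt \<open>With w = R1 R2 v we have v = (I - t2 S)(I - t1 S) w, so the form expands into
      w \<bullet> S w - (t1 + t2) |S w|^2 + t1 t2 (S w) \<bullet> S (S w), a sum of nonnegative terms.\<close>
    define w where "w = R1 *\<^sub>v (R2 *\<^sub>v v)"
    define a where "a = S *\<^sub>v w"
    have w: "w \<in> carrier_vec m" and a: "a \<in> carrier_vec m" and Sa: "S *\<^sub>v a \<in> carrier_vec m"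
      using R1 R2 S v by (auto simp: w_def a_def)
    have "(R1 * S * R2) *\<^sub>v v = (R1 * S) *\<^sub>v (R2 *\<^sub>v v)"
      using R1 R2 S v by (meson assoc_mult_mat_vec mult_carrier_mat)
    also have "\<dots> = (S * R1) *\<^sub>v (R2 *\<^sub>v v)"
      using resolvent_commute[OF S psd t1] by (simp add: R1_def)
    also have "\<dots> = a"
      using R1 R2 S v by (simp add: a_def w_def)
    finally have image: "(R1 * S * R2) *\<^sub>v v = a" .
    have "(1\<^sub>m m - t1 \<cdot>\<^sub>m S) *\<^sub>v w = ((1\<^sub>m m - t1 \<cdot>\<^sub>m S) * R1) *\<^sub>v (R2 *\<^sub>v v)"
      using R1 R2 S v unfolding w_def by (auto intro!: assoc_mult_mat_vec[symmetric])
    also have "\<dots> = R2 *\<^sub>v v"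
      using one_minus_smult_mult_resolvent[OF S psd t1] R2 v by (simp add: R1_def)
    finally have "(1\<^sub>m m - t2 \<cdot>\<^sub>m S) *\<^sub>v ((1\<^sub>m m - t1 \<cdot>\<^sub>m S) *\<^sub>v w)
        = ((1\<^sub>m m - t2 \<cdot>\<^sub>m S) * R2) *\<^sub>v v"
      using R2 S v by (auto intro!: assoc_mult_mat_vec[symmetric])
    also have "\<dots> = v"
      using one_minus_smult_mult_resolvent[OF S psd t2] v by (simp add: R2_def)
    finally have "v = (w - t1 \<cdot>\<^sub>v a) - t2 \<cdot>\<^sub>v (a - t1 \<cdot>\<^sub>v (S *\<^sub>v a))"
      using S w a by (simp add: one_minus_smult_mat_mult_vec mult_minus_distrib_mat_vec[of _ m m]
          mult_mat_vec a_def)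
    then have "v \<bullet> a = w \<bullet> a - (t1 + t2) * (a \<bullet> a) + (t1 * t2) * ((S *\<^sub>v a) \<bullet> a)"
      using w a Sa by (simp add: minus_scalar_prod_distrib[of _ m] smult_scalar_prod_distrib[of _ m]
          algebra_simps)
    moreover have "0 \<le> w \<bullet> a"
      using psd w S unfolding psd_mat_def a_def by auto
    moreover have "0 \<le> (S *\<^sub>v a) \<bullet> a"
      using psd a S unfolding psd_mat_def comm_scalar_prod[OF Sa a] by auto
    moreover have "0 \<le> a \<bullet> a" using scalar_prod_self_nonneg[OF a] .
    ultimately show ?thesis
      unfolding image using t1 t2 mult_nonpos_nonneg[of "t1 + t2" "a \<bullet> a"]
        mult_nonneg_nonneg[of "t1 * t2" "(S *\<^sub>v a) \<bullet> a"] mult_nonpos_nonpos[of t1 t2]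
      by linarith
  qed
  then show ?thesis using R2 unfolding psd_mat_def R1_def R2_def by simp
qed

lemma resolvent_identity:
  fixes S :: "'a :: linordered_field mat"
  assumes S: "S \<in> carrier_mat m m" and psd: "psd_mat S" and t1: "t1 \<le> 0" and t2: "t2 \<le> 0"
  shows "resolvent S t1 - resolvent S t2 = (t1 - t2) \<cdot>\<^sub>m (resolvent S t1 * S * resolvent S t2)"
proof -
  define R1 where "R1 = resolvent S t1"
  define R2 where "R2 = resolvent S t2"
  let ?K1 = "1\<^sub>m m - t1 \<cdot>\<^sub>m S" and ?K2 = "1\<^sub>m m - t2 \<cdot>\<^sub>m S"
  have R1: "R1 \<in> carrier_mat m m" and R2: "R2 \<in> carrier_mat m m"
    using resolvent_carrier[OF S psd] t1 t2 by (auto simp: R1_def R2_def)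
  have K1: "?K1 \<in> carrier_mat m m" and K2: "?K2 \<in> carrier_mat m m" using S by auto
  have "(t1 - t2) \<cdot>\<^sub>m (R1 * S * R2) = R1 * ((t1 - t2) \<cdot>\<^sub>m S) * R2"
    using R1 R2 S by (simp add: mult_smult_distrib[of _ m m _ m] mult_smult_assoc_mat[of _ m m _ m])
  also have "(t1 - t2) \<cdot>\<^sub>m S = ?K2 - ?K1"
    using S by (intro eq_matI) (auto simp: algebra_simps)
  also have "R1 * (?K2 - ?K1) * R2 = R1 * ?K2 * R2 - R1 * ?K1 * R2"
    using R1 R2 K1 K2 by (simp add: mult_minus_distrib_mat[of _ m m] minus_mult_distrib_mat[of _ m m])
  also have "R1 * ?K2 * R2 = R1"
    using R1 R2 K2 one_minus_smult_mult_resolvent[OF S psd t2]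
    by (simp add: assoc_mult_mat[of R1 m m ?K2 m R2 m] R2_def)
  also have "R1 * ?K1 * R2 = R2"
    using R2 resolvent_mult_one_minus_smult[OF S psd t1] by (simp add: R1_def)
  finally show ?thesis by (simp add: R1_def R2_def)
qed

lemma mat_trace_resolvent_mono:
  fixes S :: "'a :: linordered_field mat"
  assumes S: "S \<in> carrier_mat m m" and psd: "psd_mat S" and t1: "t1 \<le> 0" and t21: "t2 \<le> t1"
  shows "mat_trace (resolvent S t2) \<le> mat_trace (resolvent S t1)"
proof -
  have t2: "t2 \<le> 0" using t1 t21 by simp
  have R1: "resolvent S t1 \<in> carrier_mat m m" and R2: "resolvent S t2 \<in> carrier_mat m m"
    using resolvent_carrier[OF S psd] t1 t2 by auto
  have "mat_trace (resolvent S t1) - mat_trace (resolvent S t2)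
      = (t1 - t2) * mat_trace (resolvent S t1 * S * resolvent S t2)"
    using resolvent_identity[OF S psd t1 t2] R1 R2 S
    by (simp add: mat_trace_minus[symmetric, of _ m] mat_trace_smult[of _ m])
  also have "\<dots> \<ge> 0"
  proof (rule mult_nonneg_nonneg)
    show "0 \<le> mat_trace (resolvent S t1 * S * resolvent S t2)"
      by (rule mat_trace_nonneg_if_psd[OF _ psd_resolvent_mult_resolvent[OF S psd t1 t2]])
        (use R1 R2 S in auto)
  qed (use t21 in simp)
  finally show ?thesis by simp
qed

lemma mat_trace_smult_mult_resolvent:
  fixes S :: "'a :: linordered_field mat"
  assumes S: "S \<in> carrier_mat m m" and psd: "psd_mat S" and t: "t \<le> 0"
  shows "mat_trace ((t \<cdot>\<^sub>m S) * resolvent S t) = mat_trace (resolvent S t) - of_nat m"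
proof -
  let ?K = "1\<^sub>m m - t \<cdot>\<^sub>m S"
  have R: "resolvent S t \<in> carrier_mat m m" using resolvent_carrier[OF assms] .
  have K: "?K \<in> carrier_mat m m" using S by auto
  have "t \<cdot>\<^sub>m S = 1\<^sub>m m - ?K" using S by (intro eq_matI) auto
  then have "(t \<cdot>\<^sub>m S) * resolvent S t = 1\<^sub>m m * resolvent S t - ?K * resolvent S t"
    using K R minus_mult_distrib_mat[of "1\<^sub>m m" m m ?K "resolvent S t" m] by auto
  also have "\<dots> = resolvent S t - 1\<^sub>m m"
    using R one_minus_smult_mult_resolvent[OF assms] by simp
  finally show ?thesis using R by (simp add: mat_trace_minus[of _ m] mat_trace_one)
qed

lemma resolvent_term_eq:
  assumes S: "S \<in> carrier_mat m m" and "psd_mat S" and "z * s \<le> 0"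
  shows "resolvent_term n S z s = (mat_trace (resolvent S (z * s)) - real m) / real n"
  using mat_trace_smult_mult_resolvent[OF assms] S
  unfolding resolvent_term_def resolvent_def by simp

lemma resolvent_term_antimono:
  assumes S: "S \<in> carrier_mat m m" and psd: "psd_mat S"
    and z: "z \<le> 0" and s1: "0 \<le> s1" and s12: "s1 \<le> s2"
  shows "resolvent_term n S z s2 \<le> resolvent_term n S z s1"
proof -
  have t1: "z * s1 \<le> 0" and t2: "z * s2 \<le> 0"
    using z s1 s12 by (simp_all add: mult_nonpos_nonneg)
  have "mat_trace (resolvent S (z * s2)) \<le> mat_trace (resolvent S (z * s1))"
    using mat_trace_resolvent_mono[OF S psd t1] z s12 by (simp add: mult_left_mono_neg)
  then show ?thesis
    using resolvent_term_eq[OF S psd t1] resolvent_term_eq[OF S psd t2] by (simp add: divide_right_mono)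
qed

theorem lemmaA3:
  fixes Sigma :: "nat \<Rightarrow> real mat" and d :: "nat \<Rightarrow> nat"
    and y sigma_min sigma_max z :: real and F :: "real \<Rightarrow> real"
  assumes d_lim: "filterlim d at_top sequentially"
    and ratio: "(\<lambda>n. real (d n) / real n) \<longlonglongrightarrow> y"
    and y_pos: "0 < y" and y_lt1: "y < 1"
    and dim: "\<And>n. Sigma n \<in> carrier_mat (d n) (d n)"
    and symm: "\<And>n. transpose_mat (Sigma n) = Sigma n"
    and psd: "\<And>n v. v \<in> carrier_vec (d n) \<Longrightarrow> 0 \<le> scalar_prod v (Sigma n *\<^sub>v v)"
    and smin_pos: "0 < sigma_min" and smin_le: "sigma_min \<le> sigma_max"
    and eig: "\<And>n lam. eigenvalue (Sigma n) lam \<Longrightarrow> sigma_min \<le> lam \<and> lam \<le> sigma_max"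
    and F_dist: "\<exists>M. real_distribution M \<and> F = cdf M"
    and esd_conv: "AE u in lborel. 0 < u \<longrightarrow> (\<lambda>n. esd (Sigma n) u) \<longlonglongrightarrow> F u"
    and z_neg: "z < 0"
  shows "\<forall>s1 s2 L1 L2. 0 \<le> s1 \<and> 0 \<le> s2
            \<and> (\<lambda>n. resolvent_term n (Sigma n) z s1) \<longlonglongrightarrow> L1 \<and> s1 = 1 + L1
            \<and> (\<lambda>n. resolvent_term n (Sigma n) z s2) \<longlonglongrightarrow> L2 \<and> s2 = 1 + L2
            \<longrightarrow> s1 = s2"
proof (intro allI impI, elim conjE)
  fix s1 s2 L1 L2
  assume s1: "0 \<le> s1" and s2: "0 \<le> s2"
    and L1: "(\<lambda>n. resolvent_term n (Sigma n) z s1) \<longlonglongrightarrow> L1" and fix1: "s1 = 1 + L1"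
    and L2: "(\<lambda>n. resolvent_term n (Sigma n) z s2) \<longlonglongrightarrow> L2" and fix2: "s2 = 1 + L2"
  have psd_Sigma: "psd_mat (Sigma n)" for n
    using psd[of _ n] dim[of n] unfolding psd_mat_def by auto
  have limit_antimono: "L' \<le> L"
    if "0 \<le> a" "a \<le> b" "(\<lambda>n. resolvent_term n (Sigma n) z a) \<longlonglongrightarrow> L"
      "(\<lambda>n. resolvent_term n (Sigma n) z b) \<longlonglongrightarrow> L'" for a b L L'
    using LIMSEQ_le[OF that(4,3)] resolvent_term_antimono[OF dim psd_Sigma] z_neg that(1,2) by simp
  show "s1 = s2"
  proof (cases "s1 \<le> s2")
    case True
    then show ?thesis using limit_antimono[OF s1 True L1 L2] fix1 fix2 by simp
  next
    case False
    then show ?thesis using limit_antimono[OF s2 _ L2 L1] fix1 fix2 by simp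
  qed
qed

end
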